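(* Let $f:=\mathrm{abs}*M_2$ on $\mathbb R$. Then for every $d\ge2$ and every $r\in\mathbb N$, the function $x\mapsto -f(\|x\|)$ on $\mathbb R^d$ is not conditionally positive definite of order $r$.
   Context: $\mathrm{abs}(x)=|x|$; $M_2(x)=\max(1-|x|,0)$ (centered cardinal B-spline of order 2). $\mathrm{CP}_r(\mathbb R^d)$: a continuous even $g:\mathbb R^d\to\mathbb C$ is conditionally positive definite of order $r$ if $\sum_{j,k}a_j\bar a_kg(x_j-x_k)\ge0$ for all $N$, all $x_1,\dots,x_N\in\mathbb R^d$ and all $a\in\mathbb C^N\setminus\{0\}$ with $\sum_ja_jp(x_j)=0$ for all $d$-variate polynomials $p$ of degree $\le r-1$. *)

theory Defs
  imports "HOL-Analysis.Analysis" "HOL-Library.Complex_Order"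
begin

definition M2 :: "real \<Rightarrow> real" where
  "M2 x = max (1 - \<bar>x\<bar>) 0"

definition absM2 :: "real \<Rightarrow> real" where
  "absM2 t = integral UNIV (\<lambda>s. \<bar>t - s\<bar> * M2 s)"

definition monomial_vec :: "('n::finite \<Rightarrow> nat) \<Rightarrow> real^'n \<Rightarrow> real" where
  "monomial_vec \<alpha> x = (\<Prod>i\<in>UNIV. (x $ i) ^ (\<alpha> i))"

text \<open>The condition
  "sum_j a_j p(x_j) = 0 for all polynomials p of degree at most r-1" is expressed
  (by linearity) via all monomials of total degree < r; for r = 0 there is no condition.\<close>
definition CP :: "nat \<Rightarrow> (real^'n::finite \<Rightarrow> complex) \<Rightarrow> bool" where
  "CP r g \<longleftrightarrow> continuous_on UNIV g \<and> (\<forall>x. g (-x) = g x) \<and>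
     (\<forall>N (xs :: nat \<Rightarrow> real^'n) (a :: nat \<Rightarrow> complex).
        (\<exists>j<N. a j \<noteq> 0) \<longrightarrow>
        (\<forall>\<alpha> :: 'n \<Rightarrow> nat. (\<Sum>i\<in>UNIV. \<alpha> i) < r \<longrightarrow>
            (\<Sum>j<N. a j * complex_of_real (monomial_vec \<alpha> (xs j))) = 0) \<longrightarrow>
        0 \<le> (\<Sum>j<N. \<Sum>k<N. a j * cnj (a k) * g (xs j - xs k)))"

end

theory Submission
  imports Defs
begin

text \<open>
  Already on a small planar configuration the quadratic form of \<open>f(\<parallel>x\<parallel>)\<close> is positive:
  take the points \<open>(a/3, b/3)\<close>, \<open>a, b < 10\<close>, with weights \<open>\<phi> a * \<phi> b\<close>, where
  \<open>\<Sum>\<phi> = 0\<close>; positivity of its energy \<open>E(0)\<close> is a numerical computation with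
  rational enclosures of square roots.

  To satisfy the moment conditions of order \<open>r\<close>, take \<open>r + 1\<close> copies translated by
  \<open>i h\<close> along a coordinate axis and weighted by \<open>(-1)^i (r choose i)\<close>: this finite
  difference annihilates all polynomials of degree \<open>< r\<close>. The energy of the union is
  \<open>\<Sum> c\<^sub>i c\<^sub>j E((i - j) h)\<close>, where \<open>E(W)\<close> is the interaction of the configuration
  with its translate by \<open>W\<close>. As \<open>f(t) = t\<close> for \<open>t \<ge> 1\<close>, \<open>f(\<parallel>x + W e\<^sub>1\<parallel>)\<close> is
  affine in \<open>x\<close> up to \<open>O(1/|W|)\<close>, and the zero total weight kills the affine part.
  So \<open>E(W) = O(1/|W|)\<close>, and for large \<open>h\<close> the diagonal terms \<open>E(0) > 0\<close> dominate:
  the quadratic form of \<open>-f(\<parallel>x\<parallel>)\<close> is negative on an admissible family.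
\<close>

lemma has_integral_antiderivative:
  fixes P p :: "real \<Rightarrow> real"
  assumes "a \<le> b" "\<And>x. (P has_real_derivative p x) (at x)" "P b - P a = I"
  shows "(p has_integral I) {a..b}"
proof -
  have "(p has_integral P b - P a) {a..b}"
    using assms(1,2)
    by (intro fundamental_theorem_of_calculus)
       (auto intro: has_field_derivative_at_within
         simp: has_real_derivative_iff_has_vector_derivative[symmetric])
  with assms(3) show ?thesis by simp
qed

lemma absM2_eqI:
  assumes "((\<lambda>s. \<bar>t - s\<bar> * M2 s) has_integral I) {-1..1}"
  shows "absM2 t = I"
proof -
  have "(\<lambda>s. if s \<in> {-1..1} then \<bar>t - s\<bar> * M2 s else 0) = (\<lambda>s. \<bar>t - s\<bar> * M2 s)"
    by (auto simp: M2_def fun_eq_iff)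
  with assms have "((\<lambda>s. \<bar>t - s\<bar> * M2 s) has_integral I) UNIV"
    using has_integral_restrict_UNIV[of "{-1..1}" "\<lambda>s. \<bar>t - s\<bar> * M2 s" I] by simp
  then show ?thesis
    unfolding absM2_def by (rule integral_unique)
qed

lemma absM2_integrand_left_half:
  assumes "0 \<le> t"
  shows "((\<lambda>s. \<bar>t - s\<bar> * M2 s) has_integral t/2 + 1/6) {-1..0}"
proof -
  have "((\<lambda>s. (t - s) * (1 + s)) has_integral t/2 + 1/6) {-1..0}"
    by (rule has_integral_antiderivative[where P="\<lambda>s. t * s + t * s^2/2 - s^2/2 - s^3/3"])
      (auto intro!: derivative_eq_intros simp: algebra_simps power2_eq_square)
  then show ?thesis
    by (rule has_integral_eq[rotated]) (use assms in \<open>auto simp: M2_def\<close>)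
qed

lemma absM2_on_unit_interval:
  assumes "0 \<le> t" "t \<le> 1"
  shows "absM2 t = 1/3 + t^2 - t^3/3"
proof -
  have "((\<lambda>s. (t - s) * (1 - s)) has_integral t^2/2 - t^3/6) {0..t}"
    by (rule has_integral_antiderivative[where P="\<lambda>s. t * s - t * s^2/2 - s^2/2 + s^3/3"])
      (use assms in \<open>auto intro!: derivative_eq_intros simp: algebra_simps power2_eq_square power3_eq_cube\<close>)
  then have middle: "((\<lambda>s. \<bar>t - s\<bar> * M2 s) has_integral t^2/2 - t^3/6) {0..t}"
    by (rule has_integral_eq[rotated]) (use assms in \<open>auto simp: M2_def\<close>)
  have "((\<lambda>s. (s - t) * (1 - s)) has_integral (1 - t)^3/6) {t..1}"
    by (rule has_integral_antiderivative[where P="\<lambda>s. s^2/2 - s^3/3 - t * s + t * s^2/2"])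
      (use assms in \<open>auto intro!: derivative_eq_intros simp: algebra_simps power2_eq_square power3_eq_cube\<close>)
  then have right: "((\<lambda>s. \<bar>t - s\<bar> * M2 s) has_integral (1 - t)^3/6) {t..1}"
    by (rule has_integral_eq[rotated]) (use assms in \<open>auto simp: M2_def\<close>)
  have left_middle: "((\<lambda>s. \<bar>t - s\<bar> * M2 s) has_integral (t/2 + 1/6) + (t^2/2 - t^3/6)) {-1..t}"
    by (rule has_integral_combine[OF _ _ absM2_integrand_left_half middle]) (use assms in auto)
  have "((\<lambda>s. \<bar>t - s\<bar> * M2 s) has_integral (t/2 + 1/6) + (t^2/2 - t^3/6) + (1 - t)^3/6) {-1..1}"
    by (rule has_integral_combine[OF _ _ left_middle right]) (use assms in auto)
  then show ?thesis
    by (rule absM2_eqI[THEN trans]) (simp add: field_simps power2_eq_square power3_eq_cube)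
qed

lemma absM2_eq_self:
  assumes "1 \<le> t"
  shows "absM2 t = t"
proof -
  have "((\<lambda>s. (t - s) * (1 - s)) has_integral t/2 - 1/6) {0..1}"
    by (rule has_integral_antiderivative[where P="\<lambda>s. t * s - t * s^2/2 - s^2/2 + s^3/3"])
      (auto intro!: derivative_eq_intros simp: algebra_simps power2_eq_square)
  then have right: "((\<lambda>s. \<bar>t - s\<bar> * M2 s) has_integral t/2 - 1/6) {0..1}"
    by (rule has_integral_eq[rotated]) (use assms in \<open>auto simp: M2_def\<close>)
  have "((\<lambda>s. \<bar>t - s\<bar> * M2 s) has_integral (t/2 + 1/6) + (t/2 - 1/6)) {-1..1}"
    by (rule has_integral_combine[OF _ _ absM2_integrand_left_half right]) (use assms in auto)
  then show ?thesis
    by (rule absM2_eqI[THEN trans]) simp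
qed

definition fdiff_coeff :: "nat \<Rightarrow> nat \<Rightarrow> real" where
  "fdiff_coeff m i = (-1) ^ i * real (m choose i)"

lemma fdiff_coeff_0 [simp]: "fdiff_coeff m 0 = 1"
  by (simp add: fdiff_coeff_def)

lemma fdiff_coeff_Suc_Suc: "fdiff_coeff (Suc m) (Suc i) = fdiff_coeff m (Suc i) - fdiff_coeff m i"
  by (simp add: fdiff_coeff_def algebra_simps)

lemma sum_fdiff_coeff_Suc:
  "(\<Sum>i\<le>Suc m. fdiff_coeff (Suc m) i * g i) = (\<Sum>i\<le>m. fdiff_coeff m i * (g i - g (Suc i)))"
proof -
  have "(\<Sum>i\<le>Suc m. fdiff_coeff (Suc m) i * g i)
      = g 0 + (\<Sum>i\<le>m. (fdiff_coeff m (Suc i) - fdiff_coeff m i) * g (Suc i))"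
    by (simp only: sum.atMost_Suc_shift fdiff_coeff_Suc_Suc fdiff_coeff_0 mult_1_left)
  also have "\<dots> = (g 0 + (\<Sum>i\<le>m. fdiff_coeff m (Suc i) * g (Suc i)))
      - (\<Sum>i\<le>m. fdiff_coeff m i * g (Suc i))"
    by (simp add: algebra_simps sum_subtractf)
  also have "g 0 + (\<Sum>i\<le>m. fdiff_coeff m (Suc i) * g (Suc i)) = (\<Sum>i\<le>Suc m. fdiff_coeff m i * g i)"
    by (simp only: sum.atMost_Suc_shift fdiff_coeff_0 mult_1_left)
  also have "\<dots> = (\<Sum>i\<le>m. fdiff_coeff m i * g i)"
    by (simp add: fdiff_coeff_def)
  finally show ?thesis
    by (simp add: algebra_simps sum_subtractf)
qed

lemma sum_fdiff_coeff_power: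
  fixes x h :: real
  assumes "k < m"
  shows "(\<Sum>i\<le>m. fdiff_coeff m i * (x + real i * h) ^ k) = 0"
  using assms
proof (induction m arbitrary: k)
  case 0
  then show ?case by simp
next
  case (Suc m)
  have step: "(x + real i * h) ^ k - (x + real (Suc i) * h) ^ k
      = - (\<Sum>j<k. of_nat (k choose j) * h ^ (k - j) * (x + real i * h) ^ j)" for i
  proof -
    have "(x + real (Suc i) * h) ^ k = ((x + real i * h) + h) ^ k"
      by (simp add: algebra_simps)
    also have "\<dots> = (\<Sum>j\<le>k. of_nat (k choose j) * h ^ (k - j) * (x + real i * h) ^ j)"
      by (simp add: binomial_ring mult_ac)
    finally show ?thesis
      by (simp add: lessThan_Suc_atMost[symmetric])
  qed
  have "(\<Sum>i\<le>Suc m. fdiff_coeff (Suc m) i * (x + real i * h) ^ k)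
      = (\<Sum>i\<le>m. fdiff_coeff m i * ((x + real i * h) ^ k - (x + real (Suc i) * h) ^ k))"
    by (rule sum_fdiff_coeff_Suc)
  also have "\<dots> = - (\<Sum>j<k. of_nat (k choose j) * h ^ (k - j) * (\<Sum>i\<le>m. fdiff_coeff m i * (x + real i * h) ^ j))"
    by (simp only: step sum_distrib_left sum_negf mult_minus_right sum.swap[of _ "{..m}"])
       (simp add: mult_ac)
  also have "\<dots> = 0"
    using Suc by simp
  finally show ?case .
qed

lemma sum_abs_fdiff_coeff: "(\<Sum>i\<le>m. \<bar>fdiff_coeff m i\<bar>) = 2 ^ m"
  by (simp add: fdiff_coeff_def abs_mult choose_row_sum flip: of_nat_sum)

lemma absM2_norm_approx:
  fixes u v W R :: real
  assumes "\<bar>u\<bar> \<le> R" "\<bar>v\<bar> \<le> R" "2 * R \<le> \<bar>W\<bar>" "2 \<le> \<bar>W\<bar>"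
  shows "\<bar>absM2 (norm (u + W, v)) - (\<bar>W\<bar> + sgn W * u)\<bar> \<le> R\<^sup>2 / \<bar>W\<bar>"
proof -
  define X where "X = \<bar>W\<bar> + sgn W * u"
  have X_abs: "\<bar>u + W\<bar> = X"
    using assms unfolding X_def by (cases "W \<ge> 0") (auto simp: sgn_if)
  have X_ge: "\<bar>W\<bar> \<le> 2 * X" "1 \<le> X"
    using assms unfolding X_def by (cases "W \<ge> 0"; auto simp: sgn_if)+
  have norm_eq: "norm (u + W, v) = sqrt (X\<^sup>2 + v\<^sup>2)"
    by (simp add: norm_prod_def flip: X_abs)
  have lower: "X \<le> sqrt (X\<^sup>2 + v\<^sup>2)"
    by (rule real_le_rsqrt) simp
  have upper: "sqrt (X\<^sup>2 + v\<^sup>2) \<le> X + v\<^sup>2 / (2 * X)"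
  proof (rule real_le_lsqrt)
    show "0 \<le> X + v\<^sup>2 / (2 * X)"
      using X_ge by simp
    have "(X + v\<^sup>2 / (2 * X))\<^sup>2 = X\<^sup>2 + v\<^sup>2 + (v\<^sup>2 / (2 * X))\<^sup>2"
      using X_ge by (simp add: power2_eq_square field_simps)
    then show "X\<^sup>2 + v\<^sup>2 \<le> (X + v\<^sup>2 / (2 * X))\<^sup>2"
      by simp
  qed
  have "v\<^sup>2 \<le> R\<^sup>2"
    using assms(2) by (metis abs_ge_zero order_trans power2_abs power_mono)
  then have "v\<^sup>2 / (2 * X) \<le> R\<^sup>2 / \<bar>W\<bar>"
    using X_ge assms(4) by (intro frac_le) auto
  moreover have "absM2 (norm (u + W, v)) = sqrt (X\<^sup>2 + v\<^sup>2)"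
    unfolding norm_eq using lower X_ge by (intro absM2_eq_self) linarith
  ultimately show ?thesis
    using lower upper unfolding X_def[symmetric] by (simp add: abs_le_iff)
qed

definition shift_energy :: "'a set \<Rightarrow> ('a \<Rightarrow> real) \<Rightarrow> ('a \<Rightarrow> real \<times> real) \<Rightarrow> real \<Rightarrow> real" where
  "shift_energy Q w p W = (\<Sum>q\<in>Q. \<Sum>q'\<in>Q. w q * w q' * absM2 (norm (p q - p q' + (W, 0))))"

lemma shift_energy_decay:
  assumes "finite Q" "sum w Q = 0"
    and "\<And>q q'. q \<in> Q \<Longrightarrow> q' \<in> Q \<Longrightarrow> \<bar>fst (p q - p q')\<bar> \<le> R \<and> \<bar>snd (p q - p q')\<bar> \<le> R"
    and "2 * R \<le> \<bar>W\<bar>" "2 \<le> \<bar>W\<bar>"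
  shows "\<bar>shift_energy Q w p W\<bar> \<le> R\<^sup>2 / \<bar>W\<bar> * (\<Sum>q\<in>Q. \<bar>w q\<bar>)\<^sup>2"
proof -
  define L where "L q q' = \<bar>W\<bar> + sgn W * fst (p q - p q')" for q q'
  define E where "E q q' = absM2 (norm (p q - p q' + (W, 0))) - L q q'" for q q'
  have E_bound: "\<bar>E q q'\<bar> \<le> R\<^sup>2 / \<bar>W\<bar>" if "q \<in> Q" "q' \<in> Q" for q q'
  proof -
    have "p q - p q' + (W, 0) = (fst (p q - p q') + W, snd (p q - p q'))"
      by (simp add: prod_eq_iff)
    then show ?thesis
      unfolding E_def L_def using assms(3)[OF that] assms(4,5) by (simp add: absM2_norm_approx)
  qed
  have inner: "(\<Sum>q'\<in>Q. w q * w q' * L q q')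
      = w q * (\<bar>W\<bar> + sgn W * fst (p q)) * sum w Q - w q * (\<Sum>q'\<in>Q. w q' * sgn W * fst (p q'))" for q
  proof -
    have "(\<Sum>q'\<in>Q. w q * w q' * L q q')
        = (\<Sum>q'\<in>Q. w q * (\<bar>W\<bar> + sgn W * fst (p q)) * w q' - w q * (w q' * sgn W * fst (p q')))"
      by (intro sum.cong) (simp_all add: L_def algebra_simps)
    then show ?thesis
      by (simp only: sum_subtractf flip: sum_distrib_left)
  qed
  have linear_part: "(\<Sum>q\<in>Q. \<Sum>q'\<in>Q. w q * w q' * L q q') = 0"
    by (simp add: inner assms(2) sum_negf flip: sum_distrib_right)
  have "shift_energy Q w p W = (\<Sum>q\<in>Q. \<Sum>q'\<in>Q. w q * w q' * E q q')"
    unfolding shift_energy_def E_def using linear_part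
    by (simp add: algebra_simps sum_subtractf)
  also have "\<bar>\<dots>\<bar> \<le> (\<Sum>q\<in>Q. \<Sum>q'\<in>Q. \<bar>w q * w q' * E q q'\<bar>)"
    by (intro order_trans[OF sum_abs] sum_mono sum_abs)
  also have "\<dots> \<le> (\<Sum>q\<in>Q. \<Sum>q'\<in>Q. \<bar>w q\<bar> * \<bar>w q'\<bar> * (R\<^sup>2 / \<bar>W\<bar>))"
    unfolding abs_mult by (intro sum_mono mult_left_mono E_bound) auto
  also have "\<dots> = R\<^sup>2 / \<bar>W\<bar> * (\<Sum>q\<in>Q. \<Sum>q'\<in>Q. \<bar>w q\<bar> * \<bar>w q'\<bar>)"
    by (simp add: sum_distrib_left mult_ac)
  also have "\<dots> = R\<^sup>2 / \<bar>W\<bar> * (\<Sum>q\<in>Q. \<bar>w q\<bar>)\<^sup>2"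
    by (simp add: power2_eq_square sum_product)
  finally show ?thesis .
qed

lemma quadratic_form_ge_diagonal:
  fixes c :: "'a \<Rightarrow> real" and Z :: "'a \<Rightarrow> 'a \<Rightarrow> real"
  assumes "finite I" "\<And>i. i \<in> I \<Longrightarrow> Z i i = K"
    and "\<And>i j. i \<in> I \<Longrightarrow> j \<in> I \<Longrightarrow> i \<noteq> j \<Longrightarrow> \<bar>Z i j\<bar> \<le> \<epsilon>" "0 \<le> \<epsilon>"
  shows "K * (\<Sum>i\<in>I. (c i)\<^sup>2) - \<epsilon> * (\<Sum>i\<in>I. \<bar>c i\<bar>)\<^sup>2 \<le> (\<Sum>i\<in>I. \<Sum>j\<in>I. c i * c j * Z i j)"
proof -
  have termwise: "(if i = j then K * (c i)\<^sup>2 else 0) - \<epsilon> * (\<bar>c i\<bar> * \<bar>c j\<bar>) \<le> c i * c j * Z i j"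
    if "i \<in> I" "j \<in> I" for i j
  proof (cases "i = j")
    case True
    then show ?thesis
      using assms(2,4) that by (simp add: power2_eq_square)
  next
    case False
    have "\<bar>c i * c j * Z i j\<bar> \<le> \<bar>c i\<bar> * \<bar>c j\<bar> * \<epsilon>"
      unfolding abs_mult by (intro mult_left_mono assms(3) that False) simp
    with False show ?thesis
      by (simp add: abs_le_iff mult_ac)
  qed
  have "K * (\<Sum>i\<in>I. (c i)\<^sup>2) - \<epsilon> * (\<Sum>i\<in>I. \<bar>c i\<bar>)\<^sup>2
      = (\<Sum>i\<in>I. \<Sum>j\<in>I. (if i = j then K * (c i)\<^sup>2 else 0) - \<epsilon> * (\<bar>c i\<bar> * \<bar>c j\<bar>))"
    using assms(1)
    by (simp add: sum_subtractf sum_distrib_left sum_product power2_eq_square mult_ac)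
  also have "\<dots> \<le> (\<Sum>i\<in>I. \<Sum>j\<in>I. c i * c j * Z i j)"
    by (intro sum_mono termwise)
  finally show ?thesis .
qed

definition plane_embed :: "'n::finite \<Rightarrow> 'n \<Rightarrow> real \<times> real \<Rightarrow> real^'n" where
  "plane_embed i j p = (\<chi> k. if k = i then fst p else if k = j then snd p else 0)"

lemma plane_embed_diff: "plane_embed i j p - plane_embed i j q = plane_embed i j (p - q)"
  by (simp add: plane_embed_def vec_eq_iff)

lemma norm_plane_embed:
  assumes "i \<noteq> j"
  shows "norm (plane_embed i j p) = norm p"
proof -
  have "(\<Sum>k\<in>UNIV. (plane_embed i j p $ k)\<^sup>2) = (\<Sum>k\<in>UNIV. (if k = i then (fst p)\<^sup>2 else 0) + (if k = j then (snd p)\<^sup>2 else 0))"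
    using assms by (intro sum.cong) (auto simp: plane_embed_def)
  then show ?thesis
    by (simp add: norm_vec_def L2_set_def norm_prod_def sum.distrib)
qed

lemma monomial_vec_plane_embed:
  assumes "i \<noteq> j"
  shows "monomial_vec \<alpha> (plane_embed i j p) = fst p ^ \<alpha> i * snd p ^ \<alpha> j * (\<Prod>k\<in>UNIV - {i, j}. 0 ^ \<alpha> k)"
proof -
  let ?f = "\<lambda>k. (plane_embed i j p $ k) ^ \<alpha> k"
  have "prod ?f UNIV = ?f i * prod ?f (UNIV - {i})"
    by (rule prod.remove) auto
  also have "prod ?f (UNIV - {i}) = ?f j * prod ?f (UNIV - {i} - {j})"
    using assms by (intro prod.remove) auto
  also have "UNIV - {i} - {j} = UNIV - {i, j}"
    by auto
  also have "prod ?f (UNIV - {i, j}) = (\<Prod>k\<in>UNIV - {i, j}. 0 ^ \<alpha> k)"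
    by (intro prod.cong) (auto simp: plane_embed_def)
  finally show ?thesis
    using assms by (simp add: monomial_vec_def plane_embed_def)
qed

lemma CP_nonneg_on_finite:
  fixes g :: "real^'n::finite \<Rightarrow> complex" and p :: "'a \<Rightarrow> real^'n" and w :: "'a \<Rightarrow> complex"
  assumes "CP r g" "finite S" "\<exists>s\<in>S. w s \<noteq> 0"
    and "\<And>\<alpha> :: 'n \<Rightarrow> nat. (\<Sum>i\<in>UNIV. \<alpha> i) < r \<Longrightarrow>
           (\<Sum>s\<in>S. w s * complex_of_real (monomial_vec \<alpha> (p s))) = 0"
  shows "0 \<le> (\<Sum>s\<in>S. \<Sum>t\<in>S. w s * cnj (w t) * g (p s - p t))"
proof -
  obtain e where e: "bij_betw e {..<card S} S"
    using ex_bij_betw_nat_finite[OF assms(2)] by (auto simp: lessThan_atLeast0)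
  have reindex: "(\<Sum>s\<in>S. F s) = (\<Sum>j<card S. F (e j))" for F :: "'a \<Rightarrow> complex"
    by (rule sum.reindex_bij_betw[OF e, symmetric])
  obtain s where "s \<in> S" "w s \<noteq> 0"
    using assms(3) by blast
  then have "\<exists>j<card S. w (e j) \<noteq> 0"
    using bij_betw_imp_surj_on[OF e] by force
  moreover have "(\<Sum>j<card S. w (e j) * complex_of_real (monomial_vec \<alpha> (p (e j)))) = 0"
    if "(\<Sum>i\<in>UNIV. \<alpha> i) < r" for \<alpha> :: "'n \<Rightarrow> nat"
    using assms(4)[OF that] by (simp add: reindex)
  moreover have "\<forall>N (xs :: nat \<Rightarrow> real^'n) (a :: nat \<Rightarrow> complex).
        (\<exists>j<N. a j \<noteq> 0) \<longrightarrow>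
        (\<forall>\<alpha> :: 'n \<Rightarrow> nat. (\<Sum>i\<in>UNIV. \<alpha> i) < r \<longrightarrow>
            (\<Sum>j<N. a j * complex_of_real (monomial_vec \<alpha> (xs j))) = 0) \<longrightarrow>
        0 \<le> (\<Sum>j<N. \<Sum>k<N. a j * cnj (a k) * g (xs j - xs k))"
    using assms(1) unfolding CP_def by (elim conjE)
  ultimately have "0 \<le> (\<Sum>j<card S. \<Sum>k<card S. w (e j) * cnj (w (e k)) * g (p (e j) - p (e k)))"
    by (auto dest!: spec[of _ "card S"] spec[of _ "p \<circ> e"] spec[of _ "w \<circ> e"])
  then show ?thesis
    by (simp add: reindex)
qed

definition copies_point :: "'n::finite \<Rightarrow> 'n \<Rightarrow> ('a \<Rightarrow> real \<times> real) \<Rightarrow> real \<Rightarrow> nat \<times> 'a \<Rightarrow> real^'n" where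
  "copies_point i1 i2 p h s = plane_embed i1 i2 (p (snd s) + (real (fst s) * h, 0))"

definition copies_weight :: "nat \<Rightarrow> ('a \<Rightarrow> real) \<Rightarrow> nat \<times> 'a \<Rightarrow> real" where
  "copies_weight m w s = fdiff_coeff m (fst s) * w (snd s)"

lemma sum_copies_monomial:
  fixes i1 i2 :: "'n::finite"
  assumes "i1 \<noteq> i2" "\<alpha> i1 < m"
  shows "(\<Sum>s\<in>{..m} \<times> Q. copies_weight m w s * monomial_vec \<alpha> (copies_point i1 i2 p h s)) = 0"
proof -
  define Z where "Z = (\<Prod>k\<in>UNIV - {i1, i2}. (0::real) ^ \<alpha> k)"
  have "(\<Sum>s\<in>{..m} \<times> Q. copies_weight m w s * monomial_vec \<alpha> (copies_point i1 i2 p h s))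
      = (\<Sum>i\<le>m. \<Sum>q\<in>Q. fdiff_coeff m i * w q * ((fst (p q) + real i * h) ^ \<alpha> i1 * snd (p q) ^ \<alpha> i2 * Z))"
    using assms(1)
    by (simp add: sum.cartesian_product' copies_weight_def copies_point_def monomial_vec_plane_embed Z_def)
  also have "\<dots> = (\<Sum>q\<in>Q. w q * snd (p q) ^ \<alpha> i2 * Z * (\<Sum>i\<le>m. fdiff_coeff m i * (fst (p q) + real i * h) ^ \<alpha> i1))"
    by (subst sum.swap) (simp add: sum_distrib_left mult_ac)
  also have "\<dots> = 0"
    using sum_fdiff_coeff_power[OF assms(2)] by simp
  finally show ?thesis .
qed

lemma sum_copies_energy:
  fixes i1 i2 :: "'n::finite"
  assumes "i1 \<noteq> i2"
  shows "(\<Sum>s\<in>{..m} \<times> Q. \<Sum>t\<in>{..m} \<times> Q. copies_weight m w s * copies_weight m w t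
            * absM2 (norm (copies_point i1 i2 p h s - copies_point i1 i2 p h t)))
       = (\<Sum>i\<le>m. \<Sum>i'\<le>m. fdiff_coeff m i * fdiff_coeff m i' * shift_energy Q w p ((real i - real i') * h))"
proof -
  have dist: "norm (copies_point i1 i2 p h (i, q) - copies_point i1 i2 p h (i', q'))
      = norm (p q - p q' + ((real i - real i') * h, 0))" for i i' q q'
  proof -
    have shift: "p q + (real i * h, 0) - (p q' + (real i' * h, 0)) = p q - p q' + ((real i - real i') * h, 0)"
      by (simp add: prod_eq_iff algebra_simps)
    show ?thesis
      unfolding copies_point_def fst_conv snd_conv plane_embed_diff shift
      by (rule norm_plane_embed[OF assms])
  qed
  have "(\<Sum>s\<in>{..m} \<times> Q. \<Sum>t\<in>{..m} \<times> Q. copies_weight m w s * copies_weight m w t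
            * absM2 (norm (copies_point i1 i2 p h s - copies_point i1 i2 p h t)))
      = (\<Sum>i\<le>m. \<Sum>q\<in>Q. \<Sum>i'\<le>m. \<Sum>q'\<in>Q. fdiff_coeff m i * w q * (fdiff_coeff m i' * w q')
            * absM2 (norm (p q - p q' + ((real i - real i') * h, 0))))"
    by (simp add: sum.cartesian_product' copies_weight_def dist)
  also have "\<dots> = (\<Sum>i\<le>m. \<Sum>i'\<le>m. \<Sum>q\<in>Q. \<Sum>q'\<in>Q. fdiff_coeff m i * w q * (fdiff_coeff m i' * w q')
            * absM2 (norm (p q - p q' + ((real i - real i') * h, 0))))"
    by (intro sum.cong refl sum.swap)
  also have "\<dots> = (\<Sum>i\<le>m. \<Sum>i'\<le>m. fdiff_coeff m i * fdiff_coeff m i' * shift_energy Q w p ((real i - real i') * h))"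
    by (simp add: shift_energy_def sum_distrib_left mult_ac)
  finally show ?thesis .
qed

lemma fdiff_shift_energy_pos:
  assumes "finite Q" "sum w Q = 0"
    and bound: "\<And>q q'. q \<in> Q \<Longrightarrow> q' \<in> Q \<Longrightarrow> \<bar>fst (p q - p q')\<bar> \<le> R \<and> \<bar>snd (p q - p q')\<bar> \<le> R"
    and pos: "0 < shift_energy Q w p 0"
  obtains h where "0 < (\<Sum>i\<le>m. \<Sum>i'\<le>m. fdiff_coeff m i * fdiff_coeff m i' * shift_energy Q w p ((real i - real i') * h))"
proof
  define E where "E = shift_energy Q w p 0"
  define A where "A = (\<Sum>q\<in>Q. \<bar>w q\<bar>)\<^sup>2"
  define h where "h = 2 + 2 * \<bar>R\<bar> + 2 * 4 ^ m * R\<^sup>2 * A / E"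
  have "0 \<le> 2 * 4 ^ m * R\<^sup>2 * A / E"
    using pos unfolding E_def A_def by simp
  then have h: "2 \<le> h" "2 * R \<le> h"
    unfolding h_def using abs_ge_self[of R] by linarith+
  have "h * E = (2 + 2 * \<bar>R\<bar>) * E + 2 * 4 ^ m * R\<^sup>2 * A"
    using pos unfolding h_def E_def by (simp add: field_simps)
  moreover have "0 \<le> (2 + 2 * \<bar>R\<bar>) * E"
    using pos unfolding E_def by simp
  ultimately have hE: "2 * 4 ^ m * R\<^sup>2 * A \<le> h * E"
    by linarith
  have off_diag: "\<bar>shift_energy Q w p ((real i - real i') * h)\<bar> \<le> R\<^sup>2 * A / h" if "i \<noteq> i'" for i i'
  proof -
    have far: "h \<le> \<bar>(real i - real i') * h\<bar>"
      using that h by (simp add: abs_mult)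
    then have "\<bar>shift_energy Q w p ((real i - real i') * h)\<bar> \<le> R\<^sup>2 / \<bar>(real i - real i') * h\<bar> * A"
      unfolding A_def using h by (intro shift_energy_decay[OF assms(1,2) bound]) auto
    also have "\<dots> \<le> R\<^sup>2 / h * A"
      using far h unfolding A_def by (intro mult_right_mono divide_left_mono) (auto intro!: mult_pos_pos)
    finally show ?thesis
      by simp
  qed
  have "E * (\<Sum>i\<le>m. (fdiff_coeff m i)\<^sup>2) - R\<^sup>2 * A / h * (\<Sum>i\<le>m. \<bar>fdiff_coeff m i\<bar>)\<^sup>2
      \<le> (\<Sum>i\<le>m. \<Sum>i'\<le>m. fdiff_coeff m i * fdiff_coeff m i' * shift_energy Q w p ((real i - real i') * h))"
    using h unfolding E_def A_def by (intro quadratic_form_ge_diagonal off_diag[unfolded A_def]) auto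
  moreover have "E \<le> E * (\<Sum>i\<le>m. (fdiff_coeff m i)\<^sup>2)"
  proof -
    have "(fdiff_coeff m 0)\<^sup>2 \<le> (\<Sum>i\<le>m. (fdiff_coeff m i)\<^sup>2)"
      by (rule member_le_sum) auto
    then show ?thesis
      using pos unfolding E_def by simp
  qed
  moreover have "R\<^sup>2 * A / h * (\<Sum>i\<le>m. \<bar>fdiff_coeff m i\<bar>)\<^sup>2 \<le> E / 2"
  proof -
    have "(\<Sum>i\<le>m. \<bar>fdiff_coeff m i\<bar>)\<^sup>2 = 4 ^ m"
      by (simp add: sum_abs_fdiff_coeff power2_eq_square flip: power_mult_distrib)
    moreover have "R\<^sup>2 * A * 4 ^ m \<le> E / 2 * h"
      using hE by (simp add: algebra_simps)
    ultimately show ?thesis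
      using h by (simp add: pos_divide_le_eq)
  qed
  ultimately show "0 < (\<Sum>i\<le>m. \<Sum>i'\<le>m. fdiff_coeff m i * fdiff_coeff m i' * shift_energy Q w p ((real i - real i') * h))"
    using pos unfolding E_def by linarith
qed

definition phi :: "nat \<Rightarrow> real" where
  "phi n = [1, -2, 3, -4, 4, -4, 4, -3, 2, -1] ! n"

definition grid :: "(nat \<times> nat) set" where
  "grid = {..<10} \<times> {..<10}"

definition grid_weight :: "nat \<times> nat \<Rightarrow> real" where
  "grid_weight q = phi (fst q) * phi (snd q)"

definition grid_point :: "nat \<times> nat \<Rightarrow> real \<times> real" where
  "grid_point q = (real (fst q) / 3, real (snd q) / 3)"

lemma sum_grid: "(\<Sum>q\<in>grid. g q) = (\<Sum>a<10. \<Sum>b<10. g (a, b))"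
  by (simp add: grid_def sum.cartesian_product)

lemma sum_grid_weight: "sum grid_weight grid = 0"
  by (simp add: sum_grid grid_weight_def phi_def lessThan_nat_numeral)

lemma grid_point_diff_bound:
  assumes "q \<in> grid" "q' \<in> grid"
  shows "\<bar>fst (grid_point q - grid_point q')\<bar> \<le> 3 \<and> \<bar>snd (grid_point q - grid_point q')\<bar> \<le> 3"
  using assms by (auto simp: grid_def grid_point_def abs_le_iff)

definition autocorr :: "nat \<Rightarrow> (nat \<Rightarrow> real) \<Rightarrow> int \<Rightarrow> real" where
  "autocorr n f u = (\<Sum>a<n. \<Sum>a'<n. if int a - int a' = u then f a * f a' else 0)"

lemma autocorr_eq:
  "autocorr n f u = (\<Sum>a<n. if 0 \<le> int a - u \<and> int a - u < int n then f a * f (nat (int a - u)) else 0)"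
  unfolding autocorr_def
proof (intro sum.cong refl)
  fix a
  have "(\<Sum>a'<n. if int a - int a' = u then f a * f a' else 0)
      = (\<Sum>a'<n. if a' = nat (int a - u) \<and> 0 \<le> int a - u then f a * f (nat (int a - u)) else 0)"
    by (intro sum.cong) auto
  also have "\<dots> = (if 0 \<le> int a - u \<and> int a - u < int n then f a * f (nat (int a - u)) else 0)"
    by (auto simp: sum.delta' nat_less_iff)
  finally show "(\<Sum>a'<n. if int a - int a' = u then f a * f a' else 0) = \<dots>" .
qed

lemma sum_pairs_by_difference:
  fixes f :: "nat \<Rightarrow> real" and H :: "int \<Rightarrow> real"
  shows "(\<Sum>a<n. \<Sum>a'<n. f a * f a' * H (int a - int a'))
       = (\<Sum>i<2*n. autocorr n f (int i - int n) * H (int i - int n))"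
proof -
  have "(\<Sum>i<2*n. autocorr n f (int i - int n) * H (int i - int n))
      = (\<Sum>i<2*n. \<Sum>a<n. \<Sum>a'<n. if i = nat (int a - int a' + int n) then f a * f a' * H (int a - int a') else 0)"
    unfolding autocorr_def sum_distrib_right by (intro sum.cong refl) auto
  also have "\<dots> = (\<Sum>a<n. \<Sum>a'<n. \<Sum>i<2*n. if i = nat (int a - int a' + int n) then f a * f a' * H (int a - int a') else 0)"
    by (subst sum.swap) (simp only: sum.swap[of _ "{..<2*n}"])
  also have "\<dots> = (\<Sum>a<n. \<Sum>a'<n. f a * f a' * H (int a - int a'))"
    by (intro sum.cong refl) (auto simp: sum.delta')
  finally show ?thesis ..
qed

lemma autocorr_phi:
  "autocorr 10 phi (-10) = 0" "autocorr 10 phi (-9) = -1" "autocorr 10 phi (-8) = 4"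
  "autocorr 10 phi (-7) = -10" "autocorr 10 phi (-6) = 20" "autocorr 10 phi (-5) = -33"
  "autocorr 10 phi (-4) = 48" "autocorr 10 phi (-3) = -64" "autocorr 10 phi (-2) = 78"
  "autocorr 10 phi (-1) = -88" "autocorr 10 phi 0 = 92" "autocorr 10 phi 1 = -88"
  "autocorr 10 phi 2 = 78" "autocorr 10 phi 3 = -64" "autocorr 10 phi 4 = 48"
  "autocorr 10 phi 5 = -33" "autocorr 10 phi 6 = 20" "autocorr 10 phi 7 = -10"
  "autocorr 10 phi 8 = 4" "autocorr 10 phi 9 = -1"
  by (simp_all add: autocorr_eq phi_def eval_nat_numeral)

lemma absM2_sqrt_div3_of_le_9:
  assumes "0 \<le> x" "x \<le> 9"
  shows "absM2 (sqrt x / 3) = 1/3 + x/9 - x * sqrt x / 81"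
proof -
  have "sqrt x \<le> 3"
    using assms real_sqrt_le_mono[of x 9] by simp
  then have "absM2 (sqrt x / 3) = 1/3 + (sqrt x / 3)\<^sup>2 - (sqrt x / 3)^3/3"
    using assms by (intro absM2_on_unit_interval) auto
  also have "\<dots> = 1/3 + (sqrt x)\<^sup>2 / 9 - (sqrt x)\<^sup>2 * sqrt x / 81"
    by (simp add: power_divide power3_eq_cube power2_eq_square)
  finally show ?thesis
    using assms by simp
qed

lemma absM2_sqrt_div3_of_ge_9:
  assumes "9 \<le> x"
  shows "absM2 (sqrt x / 3) = sqrt x / 3"
  using assms real_sqrt_le_mono[of 9 x] by (intro absM2_eq_self) simp

lemma sqrt_squares:
  "sqrt (4::real) = 2" "sqrt (9::real) = 3" "sqrt (16::real) = 4" "sqrt (25::real) = 5"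
  "sqrt (36::real) = 6" "sqrt (49::real) = 7" "sqrt (64::real) = 8" "sqrt (81::real) = 9"
  "sqrt (100::real) = 10"
  by (auto intro!: real_sqrt_unique)

text \<open>Six digits suffice: the energy is about 3.13, and the coefficients of the square
  roots in it sum to less than \<open>1.3 * 10^5\<close> in absolute value.\<close>

lemma sqrt_enclosures:
  "1414213/1000000 \<le> sqrt (2::real)" "sqrt (2::real) \<le> 1414214/1000000"
  "2236067/1000000 \<le> sqrt (5::real)" "sqrt (5::real) \<le> 2236068/1000000"
  "2828427/1000000 \<le> sqrt (8::real)" "sqrt (8::real) \<le> 2828428/1000000"
  "3162277/1000000 \<le> sqrt (10::real)" "sqrt (10::real) \<le> 3162278/1000000"
  "3605551/1000000 \<le> sqrt (13::real)" "sqrt (13::real) \<le> 3605552/1000000"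
  "4123105/1000000 \<le> sqrt (17::real)" "sqrt (17::real) \<le> 4123106/1000000"
  "4242640/1000000 \<le> sqrt (18::real)" "sqrt (18::real) \<le> 4242641/1000000"
  "4472135/1000000 \<le> sqrt (20::real)" "sqrt (20::real) \<le> 4472136/1000000"
  "5099019/1000000 \<le> sqrt (26::real)" "sqrt (26::real) \<le> 5099020/1000000"
  "5385164/1000000 \<le> sqrt (29::real)" "sqrt (29::real) \<le> 5385165/1000000"
  "5656854/1000000 \<le> sqrt (32::real)" "sqrt (32::real) \<le> 5656855/1000000"
  "5830951/1000000 \<le> sqrt (34::real)" "sqrt (34::real) \<le> 5830952/1000000"
  "6082762/1000000 \<le> sqrt (37::real)" "sqrt (37::real) \<le> 6082763/1000000"
  "6324555/1000000 \<le> sqrt (40::real)" "sqrt (40::real) \<le> 6324556/1000000"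
  "6403124/1000000 \<le> sqrt (41::real)" "sqrt (41::real) \<le> 6403125/1000000"
  "6708203/1000000 \<le> sqrt (45::real)" "sqrt (45::real) \<le> 6708204/1000000"
  "7071067/1000000 \<le> sqrt (50::real)" "sqrt (50::real) \<le> 7071068/1000000"
  "7211102/1000000 \<le> sqrt (52::real)" "sqrt (52::real) \<le> 7211103/1000000"
  "7280109/1000000 \<le> sqrt (53::real)" "sqrt (53::real) \<le> 7280110/1000000"
  "7615773/1000000 \<le> sqrt (58::real)" "sqrt (58::real) \<le> 7615774/1000000"
  "7810249/1000000 \<le> sqrt (61::real)" "sqrt (61::real) \<le> 7810250/1000000"
  "8062257/1000000 \<le> sqrt (65::real)" "sqrt (65::real) \<le> 8062258/1000000"
  "8246211/1000000 \<le> sqrt (68::real)" "sqrt (68::real) \<le> 8246212/1000000"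
  "8485281/1000000 \<le> sqrt (72::real)" "sqrt (72::real) \<le> 8485282/1000000"
  "8544003/1000000 \<le> sqrt (73::real)" "sqrt (73::real) \<le> 8544004/1000000"
  "8602325/1000000 \<le> sqrt (74::real)" "sqrt (74::real) \<le> 8602326/1000000"
  "8944271/1000000 \<le> sqrt (80::real)" "sqrt (80::real) \<le> 8944272/1000000"
  "9055385/1000000 \<le> sqrt (82::real)" "sqrt (82::real) \<le> 9055386/1000000"
  "9219544/1000000 \<le> sqrt (85::real)" "sqrt (85::real) \<le> 9219545/1000000"
  "9433981/1000000 \<le> sqrt (89::real)" "sqrt (89::real) \<le> 9433982/1000000"
  "9486832/1000000 \<le> sqrt (90::real)" "sqrt (90::real) \<le> 9486833/1000000"
  "9848857/1000000 \<le> sqrt (97::real)" "sqrt (97::real) \<le> 9848858/1000000"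
  "9899494/1000000 \<le> sqrt (98::real)" "sqrt (98::real) \<le> 9899495/1000000"
  "10295630/1000000 \<le> sqrt (106::real)" "sqrt (106::real) \<le> 10295631/1000000"
  "10630145/1000000 \<le> sqrt (113::real)" "sqrt (113::real) \<le> 10630146/1000000"
  "10816653/1000000 \<le> sqrt (117::real)" "sqrt (117::real) \<le> 10816654/1000000"
  "11313708/1000000 \<le> sqrt (128::real)" "sqrt (128::real) \<le> 11313709/1000000"
  "11401754/1000000 \<le> sqrt (130::real)" "sqrt (130::real) \<le> 11401755/1000000"
  "12041594/1000000 \<le> sqrt (145::real)" "sqrt (145::real) \<le> 12041595/1000000"
  "12727922/1000000 \<le> sqrt (162::real)" "sqrt (162::real) \<le> 12727923/1000000"
  by (rule real_le_rsqrt real_le_lsqrt; simp add: power2_eq_square)+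

lemma autocorr_phi_energy_pos:
  "0 < (\<Sum>i<20. \<Sum>j<20. autocorr 10 phi (int i - 10) * autocorr 10 phi (int j - 10)
          * absM2 (sqrt (of_int ((int i - 10)\<^sup>2 + (int j - 10)\<^sup>2)) / 3))"
  apply (simp add: lessThan_nat_numeral autocorr_phi absM2_sqrt_div3_of_le_9 absM2_sqrt_div3_of_ge_9
      sqrt_squares absM2_on_unit_interval absM2_eq_self power_divide)
  using sqrt_enclosures by linarith

lemma grid_energy_autocorr:
  "shift_energy grid grid_weight grid_point 0
     = (\<Sum>i<20. \<Sum>j<20. autocorr 10 phi (int i - 10) * autocorr 10 phi (int j - 10)
          * absM2 (sqrt (of_int ((int i - 10)\<^sup>2 + (int j - 10)\<^sup>2)) / 3))"
proof -
  define H where "H u v = absM2 (sqrt (of_int (u\<^sup>2 + v\<^sup>2)) / 3)" for u v :: int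
  have dist: "absM2 (norm (grid_point (a, b) - grid_point (a', b') + (0, 0)))
      = H (int a - int a') (int b - int b')" for a b a' b' :: nat
  proof -
    have "norm (grid_point (a, b) - grid_point (a', b') + (0, 0))
        = sqrt ((real a / 3 - real a' / 3)\<^sup>2 + (real b / 3 - real b' / 3)\<^sup>2)"
      by (simp add: grid_point_def norm_prod_def)
    also have "(real a / 3 - real a' / 3)\<^sup>2 + (real b / 3 - real b' / 3)\<^sup>2
        = ((real a - real a')\<^sup>2 + (real b - real b')\<^sup>2) / 3\<^sup>2"
      by (simp add: power_divide add_divide_distrib flip: diff_divide_distrib)
    also have "(real a - real a')\<^sup>2 + (real b - real b')\<^sup>2 = of_int ((int a - int a')\<^sup>2 + (int b - int b')\<^sup>2)"
      by simp
    also have "sqrt (of_int ((int a - int a')\<^sup>2 + (int b - int b')\<^sup>2) / 3\<^sup>2)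
        = sqrt (of_int ((int a - int a')\<^sup>2 + (int b - int b')\<^sup>2)) / 3"
      by (simp add: real_sqrt_divide)
    finally show ?thesis
      unfolding H_def by (simp only:)
  qed
  have inner: "(\<Sum>b<10. \<Sum>b'<10. phi b * phi b' * H u (int b - int b'))
      = (\<Sum>j<20. autocorr 10 phi (int j - 10) * H u (int j - 10))" for u
    using sum_pairs_by_difference[of phi "H u" 10] by simp
  have "shift_energy grid grid_weight grid_point 0
      = (\<Sum>a<10. \<Sum>b<10. \<Sum>a'<10. \<Sum>b'<10. phi a * phi b * (phi a' * phi b') * H (int a - int a') (int b - int b'))"
    by (simp add: shift_energy_def sum_grid grid_weight_def dist del: sum.lessThan_Suc)
  also have "\<dots> = (\<Sum>a<10. \<Sum>a'<10. \<Sum>b<10. \<Sum>b'<10. phi a * phi b * (phi a' * phi b') * H (int a - int a') (int b - int b'))"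
    by (intro sum.cong refl sum.swap)
  also have "\<dots> = (\<Sum>a<10. \<Sum>a'<10. phi a * phi a' * (\<Sum>b<10. \<Sum>b'<10. phi b * phi b' * H (int a - int a') (int b - int b')))"
    by (simp only: sum_distrib_left mult_ac)
  also have "\<dots> = (\<Sum>i<20. autocorr 10 phi (int i - 10) * (\<Sum>j<20. autocorr 10 phi (int j - 10) * H (int i - 10) (int j - 10)))"
    using sum_pairs_by_difference[of phi "\<lambda>u. \<Sum>j<20. autocorr 10 phi (int j - 10) * H u (int j - 10)" 10]
    by (simp add: inner del: sum.lessThan_Suc)
  finally show ?thesis
    by (simp add: H_def sum_distrib_left mult_ac del: sum.lessThan_Suc)
qed

lemma grid_energy_pos: "0 < shift_energy grid grid_weight grid_point 0"
  using autocorr_phi_energy_pos by (simp only: grid_energy_autocorr)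

lemma CP_imp_fdiff_shift_energy_nonpos:
  fixes i1 i2 :: "'n::finite" and w :: "'a \<Rightarrow> real"
  assumes cp: "CP r (\<lambda>x :: real^'n. complex_of_real (- absM2 (norm x)))"
    and "i1 \<noteq> i2" "finite Q" "q\<^sub>0 \<in> Q" "w q\<^sub>0 \<noteq> 0"
  shows "(\<Sum>i\<le>r. \<Sum>i'\<le>r. fdiff_coeff r i * fdiff_coeff r i' * shift_energy Q w p ((real i - real i') * h)) \<le> 0"
proof -
  let ?S = "{..r} \<times> Q"
  let ?w = "\<lambda>s. complex_of_real (copies_weight r w s)"
  let ?p = "copies_point i1 i2 p h"
  have "0 \<le> (\<Sum>s\<in>?S. \<Sum>t\<in>?S. ?w s * cnj (?w t) * complex_of_real (- absM2 (norm (?p s - ?p t))))"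
  proof (rule CP_nonneg_on_finite[OF cp])
    show "finite ?S"
      using assms(3) by simp
    show "\<exists>s\<in>?S. ?w s \<noteq> 0"
      using assms(4,5) by (intro bexI[of _ "(0, q\<^sub>0)"]) (auto simp: copies_weight_def)
    fix \<alpha> :: "'n \<Rightarrow> nat"
    assume "(\<Sum>i\<in>UNIV. \<alpha> i) < r"
    moreover have "\<alpha> i1 \<le> (\<Sum>i\<in>UNIV. \<alpha> i)"
      by (rule member_le_sum) auto
    ultimately have "(\<Sum>s\<in>?S. copies_weight r w s * monomial_vec \<alpha> (?p s)) = 0"
      using assms(2) by (intro sum_copies_monomial) linarith+
    then show "(\<Sum>s\<in>?S. ?w s * complex_of_real (monomial_vec \<alpha> (?p s))) = 0"
      by (simp flip: of_real_mult of_real_sum)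
  qed
  also have "\<dots> = - complex_of_real (\<Sum>i\<le>r. \<Sum>i'\<le>r. fdiff_coeff r i * fdiff_coeff r i'
      * shift_energy Q w p ((real i - real i') * h))"
    by (simp add: sum_negf flip: sum_copies_energy[OF assms(2)] of_real_mult of_real_sum)
  finally show ?thesis
    by (simp add: less_eq_complex_def)
qed

theorem mainTheorem5:
  fixes r :: nat
  assumes "CARD('n::finite) \<ge> 2"
  shows "\<not> CP r (\<lambda>x :: real^'n. complex_of_real (- absM2 (norm x)))"
proof
  assume cp: "CP r (\<lambda>x :: real^'n. complex_of_real (- absM2 (norm x)))"
  obtain i1 i2 :: 'n where "i1 \<noteq> i2"
    using assms card_le_Suc0_iff_eq[of "UNIV :: 'n set"] by fastforce
  have finite_grid: "finite grid"
    by (simp add: grid_def)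
  obtain h where "0 < (\<Sum>i\<le>r. \<Sum>i'\<le>r. fdiff_coeff r i * fdiff_coeff r i'
      * shift_energy grid grid_weight grid_point ((real i - real i') * h))"
    using fdiff_shift_energy_pos[OF finite_grid sum_grid_weight grid_point_diff_bound grid_energy_pos] .
  moreover have "(\<Sum>i\<le>r. \<Sum>i'\<le>r. fdiff_coeff r i * fdiff_coeff r i'
      * shift_energy grid grid_weight grid_point ((real i - real i') * h)) \<le> 0"
    by (rule CP_imp_fdiff_shift_energy_nonpos[OF cp \<open>i1 \<noteq> i2\<close> finite_grid, of "(0, 0)"])
       (auto simp: grid_def grid_weight_def phi_def)
  ultimately show False
    by linarith
qed

end
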